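(* Let $\mathbf v=(v_1,\dots,v_m)$ and $\mathbf k=(k_1,\dots,k_m)$ be $m$-tuples of positive integers with $\mathbf v\ge\mathbf k$, and $\mathbf w=(w_1,\dots,w_n)$ and $\boldsymbol\ell=(\ell_1,\dots,\ell_n)$ be $n$-tuples of positive integers with $\mathbf w\ge\boldsymbol\ell$. Let $t$ be a positive integer with $t\le\sum_i k_i$ and $t\le\sum_i\ell_i$. Then \[ C(\mathrm{cat}(\mathbf v,\mathbf w),\mathrm{cat}(\mathbf k,\boldsymbol\ell),t)\ \le\ \max\{C(\mathbf v,\mathbf k,t),C(\mathbf w,\boldsymbol\ell,t)\}+C(\mathbf v,\mathbf k,t-1)\,C(\mathbf w,\boldsymbol\ell,t-1), \] with the convention $C(\cdot,\cdot,0)=0$.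
   Context: $\mathrm{cat}(\mathbf a,\mathbf b)$ denotes concatenation of tuples. For tuples $\mathbf a,\mathbf b$ of positive integers of the same length $p$ with $\mathbf b\le\mathbf a$ entrywise and a positive integer $s\le\sum_i b_i$: let $Y_1,\dots,Y_p$ be pairwise disjoint sets with $|Y_i|=a_i$; a block is a $p$-tuple $(B_1,\dots,B_p)$ with $B_i\subseteq Y_i$, $|B_i|=b_i$; a $p$-tuple of sets $(T_1,\dots,T_p)$ is $(\mathbf a,\mathbf b,s)$-admissible if $T_i\subseteq Y_i$, $|T_i|\le b_i$ for all $i$ and $\sum|T_i|=s$, and is contained in a block if $T_i\subseteq B_i$ for all $i$. A ${\rm GC}(\mathbf a,\mathbf b,s)$ is a finite family (repetitions allowed) of blocks containing every admissible tuple in at least one block; $C(\mathbf a,\mathbf b,s)$ is the minimum number of blocks of such a design. *)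

theory Defs
  imports Main
begin

text \<open>The ground sets are the concrete pairwise
disjoint sets Y_i = {i} x {0..<a_i} (any other choice of disjoint sets of the
same sizes gives the same value of C).\<close>

definition Yset :: "nat list \<Rightarrow> nat \<Rightarrow> (nat \<times> nat) set" where
  "Yset a i = {(i, j) | j. j < a ! i}"

definition is_block :: "nat list \<Rightarrow> nat list \<Rightarrow> (nat \<times> nat) set list \<Rightarrow> bool" where
  "is_block a b B \<longleftrightarrow> length B = length a \<and>
     (\<forall>i < length a. B ! i \<subseteq> Yset a i \<and> card (B ! i) = b ! i)"

definition admissible :: "nat list \<Rightarrow> nat list \<Rightarrow> nat \<Rightarrow> (nat \<times> nat) set list \<Rightarrow> bool" where
  "admissible a b s T \<longleftrightarrow> length T = length a \<and>
     (\<forall>i < length a. T ! i \<subseteq> Yset a i \<and> card (T ! i) \<le> b ! i) \<and>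
     (\<Sum>i<length a. card (T ! i)) = s"

definition contained_in :: "(nat \<times> nat) set list \<Rightarrow> (nat \<times> nat) set list \<Rightarrow> bool" where
  "contained_in T B \<longleftrightarrow> (\<forall>i < length T. T ! i \<subseteq> B ! i)"

text \<open>A GC(a,b,s), as a list of blocks (repetitions allowed).\<close>
definition is_GC :: "nat list \<Rightarrow> nat list \<Rightarrow> nat \<Rightarrow> (nat \<times> nat) set list list \<Rightarrow> bool" where
  "is_GC a b s F \<longleftrightarrow> (\<forall>B \<in> set F. is_block a b B) \<and>
     (\<forall>T. admissible a b s T \<longrightarrow> (\<exists>B \<in> set F. contained_in T B))"

definition Ccov :: "nat list \<Rightarrow> nat list \<Rightarrow> nat \<Rightarrow> nat" where
  "Ccov a b s = (if s = 0 then 0 else (LEAST n. \<exists>F. is_GC a b s F \<and> length F = n))"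

end

theory Submission
  imports Defs
begin

text \<open>Given optimal designs F1, F2 for strength t on the two factors and G1, G2 for
strength t - 1, combine blocks of the concatenated ground set as follows: pair up the
blocks of F1 and F2 in max(|F1|,|F2|) blocks so that every block of each occurs, and add
all |G1| |G2| products of a G1-block with a G2-block. An admissible tuple of size t
splits into parts of sizes s1 + s2 = t. If one part is empty, the other is covered by a
block of F1 or F2, hence by a paired block. Otherwise both parts have size at most t - 1,
so after enlarging them to size t - 1 they are covered by blocks of G1 and G2.\<close>

section \<open>Generalities on designs\<close>

lemma card_Yset: "card (Yset a i) = a ! i" and finite_Yset: "finite (Yset a i)"
proof -
  have Yset_eq: "Yset a i = Pair i ` {..<a ! i}" unfolding Yset_def by auto
  show "card (Yset a i) = a ! i" unfolding Yset_eq by (simp add: card_image inj_on_def)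
  show "finite (Yset a i)" unfolding Yset_eq by simp
qed

lemma sum_interpolate:
  fixes x y :: "nat \<Rightarrow> nat"
  assumes "\<forall>i<p. x i \<le> y i" "sum x {..<p} \<le> s" "s \<le> sum y {..<p}"
  shows "\<exists>c. (\<forall>i<p. x i \<le> c i \<and> c i \<le> y i) \<and> sum c {..<p} = s"
  using assms
proof (induction p arbitrary: s)
  case 0
  then show ?case by auto
next
  case (Suc p)
  \<comment> \<open>the last coordinate takes what the first p cannot absorb\<close>
  define cp where "cp = max (x p) (s - sum y {..<p})"
  have "sum x {..<p} \<le> sum y {..<p}" using Suc.prems(1) by (intro sum_mono) auto
  then have cp: "sum x {..<p} \<le> s - cp" "s - cp \<le> sum y {..<p}" "x p \<le> cp" "cp \<le> y p" "cp \<le> s"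
    using Suc.prems by (auto simp: cp_def)
  moreover have "\<forall>i<p. x i \<le> y i" using Suc.prems(1) by simp
  ultimately obtain c where c: "\<forall>i<p. x i \<le> c i \<and> c i \<le> y i" "sum c {..<p} = s - cp"
    using Suc.IH by blast
  have "sum (c(p := cp)) {..<p} = sum c {..<p}" by (rule sum.cong) auto
  with c cp have "(\<forall>i<Suc p. x i \<le> (c(p := cp)) i \<and> (c(p := cp)) i \<le> y i)
      \<and> sum (c(p := cp)) {..<Suc p} = s"
    by (auto simp: less_Suc_eq)
  then show ?case by blast
qed

lemma admissible_extend:
  assumes ba: "\<forall>i<length a. b ! i \<le> a ! i"
    and T: "admissible a b r T" and "r \<le> s" and "s \<le> (\<Sum>i<length a. b ! i)"
  shows "\<exists>T'. admissible a b s T' \<and> contained_in T T'"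
proof -
  obtain c where c: "\<forall>i<length a. card (T ! i) \<le> c i \<and> c i \<le> b ! i" "sum c {..<length a} = s"
    using sum_interpolate[of "length a" "\<lambda>i. card (T ! i)" "\<lambda>i. b ! i" s] T assms(3,4)
    unfolding admissible_def by auto
  define P where "P i B \<longleftrightarrow> T ! i \<subseteq> B \<and> B \<subseteq> Yset a i \<and> card B = c i" for i B
  have "\<exists>B. P i B" if "i < length a" for i
  proof -
    have "card (T ! i) \<le> c i" "c i \<le> card (Yset a i)" "T ! i \<subseteq> Yset a i"
      using c ba T that by (auto simp: card_Yset admissible_def intro: le_trans)
    then show ?thesis unfolding P_def by (rule exists_subset_between[OF _ _ _ finite_Yset])
  qed
  then obtain T' where T': "length T' = length a" "\<forall>i<length a. P i (T' ! i)"
    using Skolem_list_nth[of "length a" P] by auto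
  have "(\<Sum>i<length a. card (T' ! i)) = s" using T' c(2) by (auto simp: P_def intro: sum.cong)
  then have "admissible a b s T'" using T' c(1) by (auto simp: admissible_def P_def)
  moreover have "contained_in T T'" using T' T by (auto simp: P_def contained_in_def admissible_def)
  ultimately show ?thesis by blast
qed

lemma admissible_empty: "admissible a b 0 (replicate (length a) {})"
  by (simp add: admissible_def)

lemma admissible_zero_contained_in:
  assumes "admissible a b 0 T" "length B = length a"
  shows "contained_in T B"
proof -
  have "finite (T ! i)" if "i < length a" for i
    using assms(1) that finite_subset[OF _ finite_Yset] by (auto simp: admissible_def)
  then have "T ! i = {}" if "i < length a" for i
    using assms(1) that by (auto simp: admissible_def)
  then show ?thesis using assms(1) by (auto simp: contained_in_def admissible_def)
qed

lemma admissible_full_is_block: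
  assumes "admissible a b (\<Sum>i<length a. b ! i) T"
  shows "is_block a b T"
proof -
  have "\<forall>i\<in>{..<length a}. card (T ! i) \<le> b ! i" using assms by (auto simp: admissible_def)
  moreover have "(\<Sum>i<length a. card (T ! i)) = (\<Sum>i<length a. b ! i)"
    using assms by (auto simp: admissible_def)
  ultimately have "card (T ! i) = b ! i" if "i < length a" for i
    using sum_mono_inv[of "\<lambda>i. card (T ! i)" "{..<length a}" "\<lambda>i. b ! i" i] that by auto
  then show ?thesis using assms unfolding admissible_def is_block_def by blast
qed

lemma is_GC_exists:
  assumes ba: "\<forall>i<length a. b ! i \<le> a ! i"
  shows "\<exists>F. is_GC a b s F"
proof -
  let ?U = "\<Union>i<length a. Yset a i"
  have "set B \<subseteq> Pow ?U" if "is_block a b B" for B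
  proof
    fix X assume "X \<in> set B"
    moreover have "length B = length a" using that by (simp add: is_block_def)
    ultimately obtain i where "i < length a" "X = B ! i"
      by (auto simp: in_set_conv_nth)
    then show "X \<in> Pow ?U" using that by (auto simp: is_block_def)
  qed
  then have "{B. is_block a b B} \<subseteq> {B. set B \<subseteq> Pow ?U \<and> length B = length a}"
    by (auto simp: is_block_def)
  moreover have "finite {B. set B \<subseteq> Pow ?U \<and> length B = length a}"
    by (intro finite_lists_length_eq) (auto intro: finite_Yset)
  ultimately have "finite {B. is_block a b B}" by (rule finite_subset)
  then obtain F where F: "set F = {B. is_block a b B}"
    using finite_list by blast
  have "\<exists>B\<in>set F. contained_in T B" if T: "admissible a b s T" for T
  proof -
    have "s \<le> (\<Sum>i<length a. b ! i)"
      using T by (auto simp: admissible_def intro: sum_mono)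
    then obtain T' where "admissible a b (\<Sum>i<length a. b ! i) T'" "contained_in T T'"
      using admissible_extend[OF ba T] by blast
    then show ?thesis using F admissible_full_is_block by blast
  qed
  then have "is_GC a b s F" using F by (simp add: is_GC_def)
  then show ?thesis by blast
qed

lemma contained_in_trans:
  "contained_in T T' \<Longrightarrow> contained_in T' B \<Longrightarrow> length T = length T' \<Longrightarrow> contained_in T B"
  unfolding contained_in_def by (metis order_trans)

lemma is_GC_covers_smaller:
  assumes ba: "\<forall>i<length a. b ! i \<le> a ! i" and F: "is_GC a b s F"
    and T: "admissible a b r T" and "r \<le> s" and "s \<le> (\<Sum>i<length a. b ! i)"
  shows "\<exists>B\<in>set F. contained_in T B"
proof -
  obtain T' where T': "admissible a b s T'" "contained_in T T'"
    using admissible_extend[OF ba T] assms(4,5) by blast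
  then obtain B where "B \<in> set F" "contained_in T' B" using F by (auto simp: is_GC_def)
  moreover have "length T = length T'" using T T' by (simp add: admissible_def)
  ultimately show ?thesis using T'(2) contained_in_trans by blast
qed

lemma is_GC_nonempty:
  assumes "\<forall>i<length a. b ! i \<le> a ! i" "is_GC a b s F" "s \<le> (\<Sum>i<length a. b ! i)"
  shows "F \<noteq> []"
  using is_GC_covers_smaller[OF assms(1,2) admissible_empty _ assms(3)] by auto

lemma Ccov_le: "is_GC a b s F \<Longrightarrow> Ccov a b s \<le> length F"
  unfolding Ccov_def by (auto intro: Least_le)

lemma Ccov_witness:
  assumes "\<forall>i<length a. b ! i \<le> a ! i"
  obtains G where "set G \<subseteq> {B. is_block a b B}" "0 < s \<Longrightarrow> is_GC a b s G"
    "length G = Ccov a b s"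
proof (cases "s = 0")
  case True
  then show ?thesis using that[of "[]"] by (simp add: Ccov_def)
next
  case False
  have "\<exists>n F. is_GC a b s F \<and> length F = n" using is_GC_exists[OF assms] by blast
  from LeastI_ex[OF this] obtain G
    where "is_GC a b s G" "length G = (LEAST n. \<exists>F. is_GC a b s F \<and> length F = n)" by blast
  then show ?thesis using that False by (auto simp: Ccov_def is_GC_def)
qed

section \<open>Concatenation of tuples\<close>

definition shift :: "nat \<Rightarrow> nat \<times> nat \<Rightarrow> nat \<times> nat" where
  "shift m p = (fst p + m, snd p)"

text \<open>The ground set of index m + j in the concatenation is shift m applied to the
ground set of index j of the second factor (Yset_append_right).\<close>
definition cat_sets :: "nat \<Rightarrow> (nat \<times> nat) set list \<Rightarrow> (nat \<times> nat) set list \<Rightarrow> (nat \<times> nat) set list" where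
  "cat_sets m X Y = X @ map ((`) (shift m)) Y"

lemma inj_shift: "inj (shift m)"
  by (auto simp: inj_on_def shift_def prod_eq_iff)

lemma card_shift_image: "card (shift m ` X) = card X"
  by (simp add: card_image inj_on_subset[OF inj_shift])

lemma Yset_append_left: "i < length v \<Longrightarrow> Yset (v @ w) i = Yset v i"
  by (simp add: Yset_def nth_append)

lemma Yset_append_right: "Yset (v @ w) (length v + j) = shift (length v) ` Yset w j"
  by (auto simp: Yset_def nth_append shift_def image_def)

lemma nth_cat_sets:
  assumes "i < length X + length Y"
  shows "cat_sets m X Y ! i = (if i < length X then X ! i else shift m ` (Y ! (i - length X)))"
  using assms by (simp add: cat_sets_def nth_append)

lemma is_block_cat_sets:
  assumes "length v = length k" "is_block v k B" "is_block w l B'"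
  shows "is_block (v @ w) (k @ l) (cat_sets (length v) B B')"
proof -
  have len: "length B = length v" "length B' = length w" using assms by (auto simp: is_block_def)
  have "cat_sets (length v) B B' ! i \<subseteq> Yset (v @ w) i
      \<and> card (cat_sets (length v) B B' ! i) = (k @ l) ! i" if i: "i < length (v @ w)" for i
  proof (cases "i < length v")
    case True
    moreover have "B ! i \<subseteq> Yset v i" "card (B ! i) = k ! i"
      using assms(2) True by (auto simp: is_block_def)
    ultimately show ?thesis using assms(1) len by (simp add: nth_cat_sets nth_append Yset_append_left)
  next
    case False
    then obtain j where j: "i = length v + j" "j < length w" using i
      by (intro that[of "i - length v"]) auto
    moreover have "B' ! j \<subseteq> Yset w j" "card (B' ! j) = l ! j"
      using assms(3) j by (auto simp: is_block_def)
    ultimately show ?thesis using assms(1) len Yset_append_right[of v w j]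
      by (simp add: nth_cat_sets nth_append card_shift_image image_mono)
  qed
  then show ?thesis using len by (simp add: is_block_def cat_sets_def)
qed

lemma contained_in_cat_sets:
  assumes "contained_in T B" "contained_in T' B'" "length T = length B" "length T' = length B'"
  shows "contained_in (cat_sets m T T') (cat_sets m B B')"
  unfolding contained_in_def
proof (intro allI impI)
  fix i assume i: "i < length (cat_sets m T T')"
  show "cat_sets m T T' ! i \<subseteq> cat_sets m B B' ! i"
  proof (cases "i < length T")
    case True
    then show ?thesis using assms by (simp add: contained_in_def cat_sets_def nth_append)
  next
    case False
    then obtain j where "i = length T + j" "j < length T'" using i
      by (intro that[of "i - length T"]) (auto simp: cat_sets_def)
    moreover have "T' ! j \<subseteq> B' ! j" using assms calculation(2) by (simp add: contained_in_def)
    ultimately show ?thesis using assms(3,4) by (simp add: cat_sets_def nth_append image_mono)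
  qed
qed

lemma sum_lessThan_add: "(\<Sum>i<m + n. f i) = (\<Sum>i<m. f i) + (\<Sum>j<n. f (m + j :: nat))"
  by (induction n) (simp_all add: add.assoc)

lemma admissible_append_split:
  assumes "length v = length k" and T: "admissible (v @ w) (k @ l) t T"
  obtains T1 T2 s1 s2 where "T = cat_sets (length v) T1 T2"
    "admissible v k s1 T1" "admissible w l s2 T2" "s1 + s2 = t"
proof -
  let ?m = "length v" and ?n = "length w"
  define T1 where "T1 = take ?m T"
  define T2 where "T2 = map (\<lambda>X. shift ?m -` X) (drop ?m T)"
  have lT: "length T = ?m + ?n" using T by (simp add: admissible_def)
  have in_Y: "T ! (?m + j) \<subseteq> shift ?m ` Yset w j" if "j < ?n" for j
  proof -
    have "T ! (?m + j) \<subseteq> Yset (v @ w) (?m + j)" using T that by (simp add: admissible_def)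
    then show ?thesis by (simp add: Yset_append_right)
  qed
  have T2_nth: "T2 ! j = shift ?m -` T ! (?m + j)" if "j < ?n" for j
    using that lT by (simp add: T2_def)
  have T_right: "T ! (?m + j) = shift ?m ` (T2 ! j)" if "j < ?n" for j
    using in_Y[OF that] by (auto simp: T2_nth[OF that])
  have T2_sub: "T2 ! j \<subseteq> Yset w j" if "j < ?n" for j
    using in_Y[OF that] inj_shift by (auto simp: T2_nth[OF that] inj_eq)
  have lT12: "length T1 = ?m" "length T2 = ?n" using lT by (simp_all add: T1_def T2_def)
  have "T = cat_sets ?m T1 T2"
  proof (rule nth_equalityI)
    show "length T = length (cat_sets ?m T1 T2)" using lT lT12 by (simp add: cat_sets_def)
    fix i assume i: "i < length T"
    show "T ! i = cat_sets ?m T1 T2 ! i"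
    proof (cases "i < ?m")
      case True
      then show ?thesis using i lT12 by (simp add: nth_cat_sets T1_def)
    next
      case False
      then obtain j where "i = ?m + j" "j < ?n" using i lT
        by (intro that[of "i - ?m"]) auto
      then show ?thesis using lT12 T_right by (simp add: nth_cat_sets)
    qed
  qed
  moreover have "T1 ! i \<subseteq> Yset v i \<and> card (T1 ! i) \<le> k ! i" if "i < ?m" for i
  proof -
    have "T ! i \<subseteq> Yset (v @ w) i" "card (T ! i) \<le> (k @ l) ! i"
      using T that by (auto simp: admissible_def)
    then show ?thesis using that assms(1) by (simp add: T1_def Yset_append_left nth_append)
  qed
  then have "admissible v k (\<Sum>i<?m. card (T1 ! i)) T1" using lT12 by (simp add: admissible_def)
  moreover have "card (T2 ! j) \<le> l ! j" if "j < ?n" for j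
  proof -
    have "card (T ! (?m + j)) \<le> (k @ l) ! (?m + j)" using T that by (simp add: admissible_def)
    then show ?thesis using T_right[OF that] assms(1) by (simp add: card_shift_image nth_append)
  qed
  then have "admissible w l (\<Sum>j<?n. card (T2 ! j)) T2"
    using T2_sub lT12 by (simp add: admissible_def)
  moreover have "(\<Sum>i<?m. card (T1 ! i)) + (\<Sum>j<?n. card (T2 ! j)) = t"
  proof -
    have "t = (\<Sum>i<?m. card (T ! i)) + (\<Sum>j<?n. card (T ! (?m + j)))"
      using T by (simp add: admissible_def sum_lessThan_add)
    then show ?thesis by (simp add: T1_def T_right card_shift_image)
  qed
  ultimately show ?thesis using that by blast
qed

lemma pairing_list:
  assumes "xs \<noteq> []" "ys \<noteq> []"
  obtains ps where "length ps = max (length xs) (length ys)"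
    "fst ` set ps = set xs" "snd ` set ps = set ys"
proof -
  let ?n = "max (length xs) (length ys)"
  define xs' where "xs' = xs @ replicate (?n - length xs) (last xs)"
  define ys' where "ys' = ys @ replicate (?n - length ys) (last ys)"
  have "length xs' = ?n" "length ys' = ?n" by (simp_all add: xs'_def ys'_def)
  moreover have "set xs' = set xs" "set ys' = set ys"
    using assms by (auto simp: xs'_def ys'_def)
  moreover have "fst ` set (zip xs' ys') = set xs'" "snd ` set (zip xs' ys') = set ys'"
    by (metis calculation(1,2) map_fst_zip map_snd_zip set_map)+
  ultimately show ?thesis using that[of "zip xs' ys'"] by simp
qed

lemma is_GC_cat_sets:
  assumes lk: "length v = length k"
    and vk: "\<forall>i<length v. k ! i \<le> v ! i" and wl: "\<forall>j<length w. l ! j \<le> w ! j"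
    and tk: "t \<le> (\<Sum>i<length v. k ! i)" and tl: "t \<le> (\<Sum>j<length w. l ! j)"
    and F1: "is_GC v k t F1" and F2: "is_GC w l t F2"
    and ps: "fst ` set ps = set F1" "snd ` set ps = set F2"
    and G1: "set G1 \<subseteq> {B. is_block v k B}" "0 < t - 1 \<Longrightarrow> is_GC v k (t - 1) G1"
    and G2: "set G2 \<subseteq> {B. is_block w l B}" "0 < t - 1 \<Longrightarrow> is_GC w l (t - 1) G2"
  shows "is_GC (v @ w) (k @ l) t
           (map (\<lambda>(B1, B2). cat_sets (length v) B1 B2) (ps @ List.product G1 G2))"
proof -
  let ?pairs = "set (ps @ List.product G1 G2)"
  have ps_mem: "B1 \<in> set F1" "B2 \<in> set F2" if "(B1, B2) \<in> set ps" for B1 B2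
    using that ps by (metis fst_conv image_eqI, metis snd_conv image_eqI)
  have blocks: "is_block v k B1" "is_block w l B2" if "(B1, B2) \<in> ?pairs" for B1 B2
    using that ps_mem F1 F2 G1(1) G2(1) unfolding is_GC_def by auto
  have cover: "\<exists>(B1, B2)\<in>?pairs. contained_in T1 B1 \<and> contained_in T2 B2"
    if T1: "admissible v k s1 T1" and T2: "admissible w l s2 T2" and t: "s1 + s2 = t" for T1 T2 s1 s2
  proof -
    consider "s2 = 0" | "s1 = 0" | "0 < s1" "0 < s2" by blast
    then show ?thesis
    proof cases
      case 1
      then obtain B1 where "B1 \<in> set F1" "contained_in T1 B1"
        using F1 T1 t unfolding is_GC_def by auto
      moreover obtain B2 where "(B1, B2) \<in> set ps" using ps(1) calculation(1) by force
      moreover have "length B2 = length w"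
        using blocks(2)[of B1 B2] calculation(3) by (simp add: is_block_def)
      then have "contained_in T2 B2" using admissible_zero_contained_in T2 1 by blast
      ultimately show ?thesis by auto
    next
      case 2
      then obtain B2 where "B2 \<in> set F2" "contained_in T2 B2"
        using F2 T2 t unfolding is_GC_def by auto
      moreover obtain B1 where "(B1, B2) \<in> set ps" using ps(2) calculation(1) by force
      moreover have "length B1 = length v"
        using blocks(1)[of B1 B2] calculation(3) by (simp add: is_block_def)
      then have "contained_in T1 B1" using admissible_zero_contained_in T1 2 by blast
      ultimately show ?thesis by auto
    next
      case 3
      then have "0 < t - 1" "s1 \<le> t - 1" "s2 \<le> t - 1" using t by auto
      then have "\<exists>B1\<in>set G1. contained_in T1 B1" "\<exists>B2\<in>set G2. contained_in T2 B2"
        using is_GC_covers_smaller[OF vk G1(2) T1] is_GC_covers_smaller[OF wl G2(2) T2] tk tl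
        by simp_all
      then show ?thesis by auto
    qed
  qed
  show ?thesis unfolding is_GC_def
  proof (intro conjI allI impI ballI)
    fix B assume "B \<in> set (map (\<lambda>(B1, B2). cat_sets (length v) B1 B2) (ps @ List.product G1 G2))"
    then obtain B1 B2 where "(B1, B2) \<in> ?pairs" "B = cat_sets (length v) B1 B2" by auto
    then show "is_block (v @ w) (k @ l) B" using blocks is_block_cat_sets[OF lk] by blast
  next
    fix T assume "admissible (v @ w) (k @ l) t T"
    then obtain T1 T2 s1 s2 where T: "T = cat_sets (length v) T1 T2"
      "admissible v k s1 T1" "admissible w l s2 T2" "s1 + s2 = t"
      using admissible_append_split[OF lk] by blast
    then obtain B1 B2 where B: "(B1, B2) \<in> ?pairs" "contained_in T1 B1" "contained_in T2 B2"
      using cover by blast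
    moreover have "length T1 = length B1" "length T2 = length B2"
      using T(2,3) blocks[OF B(1)] by (simp_all add: admissible_def is_block_def)
    ultimately have "contained_in T (cat_sets (length v) B1 B2)"
      using T(1) contained_in_cat_sets by blast
    then show "\<exists>B\<in>set (map (\<lambda>(B1, B2). cat_sets (length v) B1 B2) (ps @ List.product G1 G2)).
        contained_in T B"
      using B(1) by force
  qed
qed

theorem theorem6p3:
  fixes v k w l :: "nat list" and t :: nat
  assumes "length v = length k" and "length w = length l"
    and "\<forall>x \<in> set v. 0 < x" and "\<forall>x \<in> set k. 0 < x"
    and "\<forall>x \<in> set w. 0 < x" and "\<forall>x \<in> set l. 0 < x"
    and "list_all2 (\<lambda>x y. y \<le> x) v k" and "list_all2 (\<lambda>x y. y \<le> x) w l"
    and "0 < t" and "t \<le> sum_list k" and "t \<le> sum_list l"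
  shows "Ccov (v @ w) (k @ l) t
           \<le> max (Ccov v k t) (Ccov w l t) + Ccov v k (t - 1) * Ccov w l (t - 1)"
proof -
  have vk: "\<forall>i<length v. k ! i \<le> v ! i" and wl: "\<forall>j<length w. l ! j \<le> w ! j"
    using assms(7,8) by (auto dest: list_all2_nthD)
  have tk: "t \<le> (\<Sum>i<length v. k ! i)" and tl: "t \<le> (\<Sum>j<length w. l ! j)"
    using assms(1,2,10,11) by (simp_all add: sum_list_sum_nth lessThan_atLeast0)
  obtain F1 where F1: "is_GC v k t F1" "length F1 = Ccov v k t"
    using Ccov_witness[OF vk] assms(9) by metis
  obtain F2 where F2: "is_GC w l t F2" "length F2 = Ccov w l t"
    using Ccov_witness[OF wl] assms(9) by metis
  obtain ps where ps: "length ps = max (length F1) (length F2)"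
    "fst ` set ps = set F1" "snd ` set ps = set F2"
    using pairing_list is_GC_nonempty[OF vk F1(1) tk] is_GC_nonempty[OF wl F2(1) tl] by metis
  obtain G1 where G1: "set G1 \<subseteq> {B. is_block v k B}" "0 < t - 1 \<Longrightarrow> is_GC v k (t - 1) G1"
    "length G1 = Ccov v k (t - 1)" using Ccov_witness[OF vk] by metis
  obtain G2 where G2: "set G2 \<subseteq> {B. is_block w l B}" "0 < t - 1 \<Longrightarrow> is_GC w l (t - 1) G2"
    "length G2 = Ccov w l (t - 1)" using Ccov_witness[OF wl] by metis
  have "Ccov (v @ w) (k @ l) t
      \<le> length (map (\<lambda>(B1, B2). cat_sets (length v) B1 B2) (ps @ List.product G1 G2))"
    by (rule Ccov_le, rule is_GC_cat_sets[OF assms(1) vk wl tk tl F1(1) F2(1) ps(2,3) G1(1,2) G2(1,2)])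
  then show ?thesis using ps(1) F1(2) F2(2) G1(3) G2(3) by simp
qed

end
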